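(* Fix $T$ and, for $0<s<T$, define $$X^*_s=\frac{\frac{X_s}{s}+\frac{1}{1-q}\frac{Y_T}{T}-\frac{X_T}{T}}{\frac1s+\frac{q}{1-q}\frac1T},\qquad \sigma_s^2=\frac{1}{\frac1s+\frac{q}{1-q}\frac1T}.$$ Then for every $0<\tau<t<T$, conditional on $X_t=x_t$, $Y_t=y_t$, $X_T=x_T$, $Y_T=y_T$, the random variable $Z_\tau:=X^*_\tau-Y_\tau$ is normal with $$\mathbb{E}[Z_\tau]=\frac{\sigma_\tau^2}{\sigma_t^2}\,(x^*_t-y_t),\qquad \mathrm{Var}(Z_\tau)=q(t-\tau)\Big[\frac{1}{t\tau}+\frac{q}{(1-q)T^2}\Big]\sigma_\tau^4,$$ where $x^*_t$ is the realized value of $X^*_t$.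
   Context: Fix an integer horizon $T_{max}\ge 1$ and $q\in(0,1)$. Let $X_0$ be the outcome, and let $A_1,\dots,A_{T_{max}},B_1,\dots,B_{T_{max}}$ be mutually independent random variables, independent of $X_0$, with $A_\tau\sim N(0,q)$, $B_\tau\sim N(0,1-q)$. Define $X_t=X_0+\sum_{\tau=1}^t(A_\tau+B_\tau)$ and $Y_t=X_0+\sum_{\tau=1}^t B_\tau$. ($X^*_s$ and $\sigma_s^2$ are the market's posterior mean and variance of $X_0$ at time $s$ when the expert's last truthful prediction was $Y_T$ at time $T$.) *)

theory Defs
  imports "HOL-Probability.Probability"
begin

text \<open>Sample space: (X0, A, B) with A i = A_i, B i = B_i for i in {1..Tmax}.
  X0 carries the flat (Lebesgue, improper) prior; A_i ~ N(0,q), B_i ~ N(0,1-q),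
  all mutually independent (product measure).\<close>

definition Omega :: "nat \<Rightarrow> real \<Rightarrow> (real \<times> (nat \<Rightarrow> real) \<times> (nat \<Rightarrow> real)) measure" where
  "Omega Tmax q =
     lborel \<Otimes>\<^sub>M
       ((PiM {1..Tmax} (\<lambda>_. density lborel (normal_density 0 (sqrt q)))) \<Otimes>\<^sub>M
        (PiM {1..Tmax} (\<lambda>_. density lborel (normal_density 0 (sqrt (1 - q))))))"

definition Xp :: "nat \<Rightarrow> real \<times> (nat \<Rightarrow> real) \<times> (nat \<Rightarrow> real) \<Rightarrow> real" where
  "Xp t \<omega> = fst \<omega> + (\<Sum>i\<in>{1..t}. fst (snd \<omega>) i + snd (snd \<omega>) i)"

definition Yp :: "nat \<Rightarrow> real \<times> (nat \<Rightarrow> real) \<times> (nat \<Rightarrow> real) \<Rightarrow> real" where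
  "Yp t \<omega> = fst \<omega> + (\<Sum>i\<in>{1..t}. snd (snd \<omega>) i)"

definition sigma2 :: "real \<Rightarrow> nat \<Rightarrow> nat \<Rightarrow> real" where
  "sigma2 q T s = 1 / (1 / real s + q / (1 - q) * (1 / real T))"

definition xstar :: "real \<Rightarrow> nat \<Rightarrow> nat \<Rightarrow> real \<Rightarrow> real \<Rightarrow> real \<Rightarrow> real" where
  "xstar q T s xs yT xT =
     (xs / real s + 1 / (1 - q) * (yT / real T) - xT / real T) /
     (1 / real s + q / (1 - q) * (1 / real T))"

definition Xstar :: "real \<Rightarrow> nat \<Rightarrow> nat \<Rightarrow> real \<times> (nat \<Rightarrow> real) \<times> (nat \<Rightarrow> real) \<Rightarrow> real" where
  "Xstar q T s \<omega> = xstar q T s (Xp s \<omega>) (Yp T \<omega>) (Xp T \<omega>)"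

definition normal_law :: "real \<Rightarrow> real \<Rightarrow> real measure" where
  "normal_law m v = density lborel (normal_density m (sqrt v))"

end

theory Submission
  imports Defs
begin

text \<open>
  Split the increments of \<open>A\<close> and \<open>B\<close> over the blocks \<open>(0,\<tau>]\<close>, \<open>(\<tau>,t]\<close>, \<open>(t,T]\<close> into
  block sums \<open>a1, a2, a3\<close> and \<open>b1, b2, b3\<close>: six independent centred normals with variances
  \<open>q\<close> resp. \<open>1 - q\<close> times the block lengths. The prior of \<open>X0\<close> is flat, so \<open>X0\<close> can be
  replaced by \<open>u = Y_t\<close>; the conditioning variables then depend only on \<open>u, a1 + a2, a3, b3\<close>, while
  \<open>Z_\<tau> = \<sigma>_\<tau>\<^sup>2 (a1/\<tau> - (a1+a2+a3)/T + q/((1-q)T) (b2+b3))\<close>. Given \<open>a1 + a2 = s\<close>, \<open>a1\<close> is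
  \<open>\<tau>/t s\<close> plus independent normal noise of variance \<open>q \<tau> (t - \<tau>)/t\<close> (completing the square),
  and \<open>b2\<close> is independent of all conditioning variables. So \<open>Z_\<tau>\<close> is the conditional mean plus
  two independent centred normals, and their variances add up to the stated one.
\<close>

lemma borel_measurable_fst[measurable]:
  "(\<lambda>x::'a::second_countable_topology \<times> 'b::second_countable_topology. fst x) \<in> borel_measurable borel"
  by (subst borel_prod[symmetric]) simp

lemma borel_measurable_snd[measurable]:
  "(\<lambda>x::'a::second_countable_topology \<times> 'b::second_countable_topology. snd x) \<in> borel_measurable borel"
  by (subst borel_prod[symmetric]) simp

lemma sets_normal_law[measurable_cong, simp]: "sets (normal_law m v) = sets borel"
  by (simp add: normal_law_def)

lemma space_normal_law[simp]: "space (normal_law m v) = UNIV"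
  by (simp add: normal_law_def)

lemma normal_density_sqrt_abs: "normal_density m (sqrt v) = normal_density m (sqrt \<bar>v\<bar>)"
proof -
  have "(sqrt v)\<^sup>2 = \<bar>v\<bar>" by (simp add: power2_eq_square real_sqrt_mult_self)
  then show ?thesis by (auto simp: normal_density_def fun_eq_iff)
qed

lemma prob_space_normal_law: "v \<noteq> 0 \<Longrightarrow> prob_space (normal_law m v)"
  unfolding normal_law_def by (subst normal_density_sqrt_abs) (rule prob_space_normal_density, simp)

lemma sigma_finite_normal_law: "sigma_finite_measure (normal_law m v)"
proof cases
  assume "v = 0"
  then have "normal_law m v = null_measure lborel"
    by (simp add: normal_law_def normal_density_def null_measure_eq_density)
  then show ?thesis
    using finite_measure.axioms(1)[of "null_measure lborel"] finite_measureI[of "null_measure lborel"] by simp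
next
  assume "v \<noteq> 0"
  then interpret prob_space "normal_law m v" by (rule prob_space_normal_law)
  show ?thesis ..
qed

lemma borel_measurable_nn_integral_normal_law[measurable (raw)]:
  "case_prod f \<in> borel_measurable (N \<Otimes>\<^sub>M normal_law m v) \<Longrightarrow>
    (\<lambda>x. \<integral>\<^sup>+ y. f x y \<partial>normal_law m v) \<in> borel_measurable N"
  by (rule sigma_finite_measure.borel_measurable_nn_integral[OF sigma_finite_normal_law])

lemma emeasure_normal_law_UNIV[simp]: "v \<noteq> 0 \<Longrightarrow> emeasure (normal_law m v) UNIV = 1"
  using prob_space.emeasure_space_1[OF prob_space_normal_law, of v m] by simp

lemma nn_integral_normal_law:
  assumes [measurable]: "h \<in> borel_measurable borel"
  shows "(\<integral>\<^sup>+x. h x \<partial>normal_law m v) = (\<integral>\<^sup>+x. ennreal (normal_density m (sqrt v) x) * h x \<partial>lborel)"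
  unfolding normal_law_def by (subst nn_integral_density) auto

lemma nn_integral_normal_law_swap:
  assumes "case_prod f \<in> borel_measurable (borel \<Otimes>\<^sub>M borel)"
  shows "(\<integral>\<^sup>+x. \<integral>\<^sup>+y. f x y \<partial>normal_law m2 v2 \<partial>normal_law m1 v1) =
         (\<integral>\<^sup>+y. \<integral>\<^sup>+x. f x y \<partial>normal_law m1 v1 \<partial>normal_law m2 v2)"
proof -
  interpret pair_sigma_finite "normal_law m1 v1" "normal_law m2 v2"
    by (intro pair_sigma_finite.intro sigma_finite_normal_law)
  show ?thesis using assms by (intro Fubini'[symmetric]) simp
qed

lemma nn_integral_normal_law_shift:
  assumes [measurable]: "h \<in> borel_measurable borel"
  shows "(\<integral>\<^sup>+x. h x \<partial>normal_law m v) = (\<integral>\<^sup>+x. h (m + x) \<partial>normal_law 0 v)"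
proof -
  have "(\<integral>\<^sup>+x. h x \<partial>normal_law m v) = (\<integral>\<^sup>+x. ennreal (normal_density m (sqrt v) x) * h x \<partial>lborel)"
    by (rule nn_integral_normal_law) simp
  also have "\<dots> = ennreal \<bar>1\<bar> * (\<integral>\<^sup>+x. ennreal (normal_density m (sqrt v) (m + 1 * x)) * h (m + 1 * x) \<partial>lborel)"
    by (rule nn_integral_real_affine) auto
  also have "\<dots> = (\<integral>\<^sup>+x. h (m + x) \<partial>normal_law 0 v)"
    by (subst nn_integral_normal_law) (simp_all add: normal_density_def)
  finally show ?thesis .
qed

lemma nn_integral_normal_law_scale:
  assumes [measurable]: "h \<in> borel_measurable borel" and k: "k \<noteq> 0" and v: "0 < v"
  shows "(\<integral>\<^sup>+x. h (k * x) \<partial>normal_law 0 v) = (\<integral>\<^sup>+x. h x \<partial>normal_law 0 (k\<^sup>2 * v))"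
proof -
  have density: "\<bar>k\<bar> * normal_density 0 (sqrt (k\<^sup>2 * v)) (k * x) = normal_density 0 (sqrt v) x" for x
    using k v by (simp add: normal_density_def real_sqrt_mult field_simps power2_eq_square)
  have "(\<integral>\<^sup>+x. h x \<partial>normal_law 0 (k\<^sup>2 * v)) =
        (\<integral>\<^sup>+x. ennreal (normal_density 0 (sqrt (k\<^sup>2 * v)) x) * h x \<partial>lborel)"
    by (rule nn_integral_normal_law) simp
  also have "\<dots> = ennreal \<bar>k\<bar> *
      (\<integral>\<^sup>+x. ennreal (normal_density 0 (sqrt (k\<^sup>2 * v)) (0 + k * x)) * h (0 + k * x) \<partial>lborel)"
    by (rule nn_integral_real_affine) (auto simp: k)
  also have "\<dots> = (\<integral>\<^sup>+x. ennreal (\<bar>k\<bar> * normal_density 0 (sqrt (k\<^sup>2 * v)) (k * x)) * h (k * x) \<partial>lborel)"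
    by (subst nn_integral_cmult[symmetric]) (auto simp: ennreal_mult' mult.assoc)
  also have "\<dots> = (\<integral>\<^sup>+x. h (k * x) \<partial>normal_law 0 v)"
    by (subst nn_integral_normal_law) (auto simp: density)
  finally show ?thesis ..
qed

text \<open>Completing the square: the joint density of \<open>(x, s - x)\<close> factors into the density of
  the sum \<open>s\<close> and the conditional density of \<open>x\<close> given \<open>s\<close>.\<close>
lemma normal_density_mult_split:
  assumes a: "0 < a" and b: "0 < b"
  shows "normal_density 0 (sqrt a) x * normal_density 0 (sqrt b) (s - x) =
         normal_density 0 (sqrt (a + b)) s * normal_density 0 (sqrt (a * b / (a + b))) (x - a / (a + b) * s)"
proof -
  have ab: "0 < a + b" and v: "0 < a * b / (a + b)" using a b by simp_all
  have nd: "normal_density 0 (sqrt c) y = exp (- y\<^sup>2 / (2 * c)) / sqrt (2 * pi * c)" if "0 < c" for c y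
    using that by (simp add: normal_density_def)
  have norm: "sqrt (2 * pi * a) * sqrt (2 * pi * b) = sqrt (2 * pi * (a + b)) * sqrt (2 * pi * (a * b / (a + b)))"
    using a b ab by (simp add: real_sqrt_mult[symmetric] field_simps)
  have expo: "- x\<^sup>2 / (2 * a) + - (s - x)\<^sup>2 / (2 * b) =
      - s\<^sup>2 / (2 * (a + b)) + - (x - a / (a + b) * s)\<^sup>2 / (2 * (a * b / (a + b)))"
    using a b ab by (simp add: power_divide divide_simps) algebra
  have "normal_density 0 (sqrt a) x * normal_density 0 (sqrt b) (s - x) =
     exp (- x\<^sup>2 / (2 * a) + - (s - x)\<^sup>2 / (2 * b)) / (sqrt (2 * pi * a) * sqrt (2 * pi * b))"
    using a b by (simp add: nd exp_add[symmetric])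
  also have "\<dots> = exp (- s\<^sup>2 / (2 * (a + b)) + - (x - a / (a + b) * s)\<^sup>2 / (2 * (a * b / (a + b)))) /
     (sqrt (2 * pi * (a + b)) * sqrt (2 * pi * (a * b / (a + b))))"
    by (simp only: expo norm)
  also have "\<dots> = normal_density 0 (sqrt (a + b)) s * normal_density 0 (sqrt (a * b / (a + b))) (x - a / (a + b) * s)"
    using ab v by (simp only: nd exp_add) simp
  finally show ?thesis .
qed

lemma nn_integral_normal_law_disintegrate_sum:
  assumes a: "0 < a" and b: "0 < b"
    and F[measurable]: "case_prod F \<in> borel_measurable (borel \<Otimes>\<^sub>M borel)"
  shows "(\<integral>\<^sup>+x. \<integral>\<^sup>+y. F (x + y) x \<partial>normal_law 0 b \<partial>normal_law 0 a) =
         (\<integral>\<^sup>+s. \<integral>\<^sup>+e. F s (e + a / (a + b) * s) \<partial>normal_law 0 (a * b / (a + b)) \<partial>normal_law 0 (a + b))"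
proof -
  define v where "v = a * b / (a + b)"
  define c where "c = a / (a + b)"
  let ?na = "\<lambda>x. ennreal (normal_density 0 (sqrt a) x)"
  let ?nb = "\<lambda>x. ennreal (normal_density 0 (sqrt b) x)"
  let ?nab = "\<lambda>x. ennreal (normal_density 0 (sqrt (a + b)) x)"
  let ?nv = "\<lambda>x. ennreal (normal_density 0 (sqrt v) x)"
  have inner: "(\<integral>\<^sup>+y. F (x + y) x \<partial>normal_law 0 b) = (\<integral>\<^sup>+s. ?nb (s - x) * F s x \<partial>lborel)" for x
  proof -
    have "(\<integral>\<^sup>+s. ?nb (s - x) * F s x \<partial>lborel) =
        ennreal \<bar>1\<bar> * (\<integral>\<^sup>+y. ?nb ((x + 1 * y) - x) * F (x + 1 * y) x \<partial>lborel)"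
      by (rule nn_integral_real_affine) auto
    also have "\<dots> = (\<integral>\<^sup>+y. F (x + y) x \<partial>normal_law 0 b)"
      by (subst nn_integral_normal_law) auto
    finally show ?thesis ..
  qed
  have conditional: "(\<integral>\<^sup>+x. ?nv (x - c * s) * F s x \<partial>lborel) = (\<integral>\<^sup>+e. F s (e + c * s) \<partial>normal_law 0 v)" for s
  proof -
    have "(\<integral>\<^sup>+x. ?nv (x - c * s) * F s x \<partial>lborel) =
        ennreal \<bar>1\<bar> * (\<integral>\<^sup>+e. ?nv ((c * s + 1 * e) - c * s) * F s (c * s + 1 * e) \<partial>lborel)"
      by (rule nn_integral_real_affine) auto
    also have "\<dots> = (\<integral>\<^sup>+e. F s (e + c * s) \<partial>normal_law 0 v)"
      by (subst nn_integral_normal_law) (auto simp: add.commute)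
    finally show ?thesis .
  qed
  have "(\<integral>\<^sup>+x. \<integral>\<^sup>+y. F (x + y) x \<partial>normal_law 0 b \<partial>normal_law 0 a) =
        (\<integral>\<^sup>+x. \<integral>\<^sup>+s. ?na x * ?nb (s - x) * F s x \<partial>lborel \<partial>lborel)"
    by (subst nn_integral_normal_law) (auto simp: inner mult.assoc nn_integral_cmult[symmetric])
  also have "\<dots> = (\<integral>\<^sup>+s. \<integral>\<^sup>+x. ?na x * ?nb (s - x) * F s x \<partial>lborel \<partial>lborel)"
    by (rule lborel_pair.Fubini'[symmetric]) simp
  also have "\<dots> = (\<integral>\<^sup>+s. \<integral>\<^sup>+x. ?nab s * (?nv (x - c * s) * F s x) \<partial>lborel \<partial>lborel)"
    using normal_density_mult_split[OF a b]
    by (simp add: v_def c_def ennreal_mult[symmetric] mult.assoc[symmetric])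
  also have "\<dots> = (\<integral>\<^sup>+s. ?nab s * (\<integral>\<^sup>+e. F s (e + c * s) \<partial>normal_law 0 v) \<partial>lborel)"
    by (subst nn_integral_cmult) (auto simp: conditional)
  also have "\<dots> = (\<integral>\<^sup>+s. \<integral>\<^sup>+e. F s (e + c * s) \<partial>normal_law 0 v \<partial>normal_law 0 (a + b))"
    by (subst (2) nn_integral_normal_law) auto
  finally show ?thesis by (simp add: v_def c_def)
qed

lemma nn_integral_normal_law_add:
  assumes a: "0 < a" and b: "0 < b" and h[measurable]: "h \<in> borel_measurable borel"
  shows "(\<integral>\<^sup>+x. \<integral>\<^sup>+y. h (x + y) \<partial>normal_law 0 b \<partial>normal_law 0 a) = (\<integral>\<^sup>+s. h s \<partial>normal_law 0 (a + b))"
  using nn_integral_normal_law_disintegrate_sum[OF a b, of "\<lambda>s x. h s"] a b by simp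

lemma nn_integral_normal_law_linear_comb:
  assumes v1: "0 < v1" and v2: "0 < v2" and k1: "k1 \<noteq> 0" and k2: "k2 \<noteq> 0"
    and f[measurable]: "f \<in> borel_measurable borel"
  shows "(\<integral>\<^sup>+e. \<integral>\<^sup>+y. f (k1 * e + k2 * y + m) \<partial>normal_law 0 v2 \<partial>normal_law 0 v1) =
         (\<integral>\<^sup>+x. f (m + x) \<partial>normal_law 0 (k1\<^sup>2 * v1 + k2\<^sup>2 * v2))"
proof -
  have p1: "0 < k1\<^sup>2 * v1" and p2: "0 < k2\<^sup>2 * v2" using v1 v2 k1 k2 by auto
  have "(\<integral>\<^sup>+e. \<integral>\<^sup>+y. f (k1 * e + k2 * y + m) \<partial>normal_law 0 v2 \<partial>normal_law 0 v1) =
        (\<integral>\<^sup>+e. \<integral>\<^sup>+y. f (k1 * e + y + m) \<partial>normal_law 0 (k2\<^sup>2 * v2) \<partial>normal_law 0 v1)"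
    by (intro nn_integral_cong nn_integral_normal_law_scale[OF _ k2 v2, of "\<lambda>y. f (_ + y + m)"]) simp
  also have "\<dots> = (\<integral>\<^sup>+w. \<integral>\<^sup>+y. f (w + y + m) \<partial>normal_law 0 (k2\<^sup>2 * v2) \<partial>normal_law 0 (k1\<^sup>2 * v1))"
    by (rule nn_integral_normal_law_scale[OF _ k1 v1,
          of "\<lambda>w. \<integral>\<^sup>+y. f (w + y + m) \<partial>normal_law 0 (k2\<^sup>2 * v2)"]) simp
  also have "\<dots> = (\<integral>\<^sup>+s. f (m + s) \<partial>normal_law 0 (k1\<^sup>2 * v1 + k2\<^sup>2 * v2))"
    using nn_integral_normal_law_add[OF p1 p2, of "\<lambda>s. f (m + s)"] by (simp add: ac_simps)
  finally show ?thesis .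
qed

lemma nn_integral_normal_law_integrate_out:
  fixes G :: "real \<Rightarrow> real \<Rightarrow> ennreal" and m :: "real \<Rightarrow> real \<Rightarrow> real"
  assumes v1: "0 < v1" and v2: "0 < v2" and k1: "k1 \<noteq> 0" and k2: "k2 \<noteq> 0"
    and [measurable]: "case_prod G \<in> borel_measurable (borel \<Otimes>\<^sub>M borel)"
      "case_prod m \<in> borel_measurable (borel \<Otimes>\<^sub>M borel)" "f \<in> borel_measurable borel"
  shows "(\<integral>\<^sup>+e. \<integral>\<^sup>+x. \<integral>\<^sup>+y. \<integral>\<^sup>+z. G x z * f (k1 * e + k2 * y + m x z)
            \<partial>normal_law 0 w2 \<partial>normal_law 0 v2 \<partial>normal_law 0 w1 \<partial>normal_law 0 v1) =
         (\<integral>\<^sup>+x. \<integral>\<^sup>+z. G x z * (\<integral>\<^sup>+u. f (m x z + u) \<partial>normal_law 0 (k1\<^sup>2 * v1 + k2\<^sup>2 * v2))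
            \<partial>normal_law 0 w2 \<partial>normal_law 0 w1)"
proof -
  have "(\<integral>\<^sup>+e. \<integral>\<^sup>+x. \<integral>\<^sup>+y. \<integral>\<^sup>+z. G x z * f (k1 * e + k2 * y + m x z)
            \<partial>normal_law 0 w2 \<partial>normal_law 0 v2 \<partial>normal_law 0 w1 \<partial>normal_law 0 v1) =
        (\<integral>\<^sup>+x. \<integral>\<^sup>+e. \<integral>\<^sup>+y. \<integral>\<^sup>+z. G x z * f (k1 * e + k2 * y + m x z)
            \<partial>normal_law 0 w2 \<partial>normal_law 0 v2 \<partial>normal_law 0 v1 \<partial>normal_law 0 w1)"
    by (rule nn_integral_normal_law_swap) measurable
  also have "\<dots> = (\<integral>\<^sup>+x. \<integral>\<^sup>+e. \<integral>\<^sup>+z. \<integral>\<^sup>+y. G x z * f (k1 * e + k2 * y + m x z)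
            \<partial>normal_law 0 v2 \<partial>normal_law 0 w2 \<partial>normal_law 0 v1 \<partial>normal_law 0 w1)"
    by (intro nn_integral_cong nn_integral_normal_law_swap) measurable
  also have "\<dots> = (\<integral>\<^sup>+x. \<integral>\<^sup>+z. \<integral>\<^sup>+e. \<integral>\<^sup>+y. G x z * f (k1 * e + k2 * y + m x z)
            \<partial>normal_law 0 v2 \<partial>normal_law 0 v1 \<partial>normal_law 0 w2 \<partial>normal_law 0 w1)"
    by (intro nn_integral_cong nn_integral_normal_law_swap) measurable
  also have "\<dots> = (\<integral>\<^sup>+x. \<integral>\<^sup>+z. G x z * (\<integral>\<^sup>+e. \<integral>\<^sup>+y. f (k1 * e + k2 * y + m x z)
            \<partial>normal_law 0 v2 \<partial>normal_law 0 v1) \<partial>normal_law 0 w2 \<partial>normal_law 0 w1)"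
    by (intro nn_integral_cong) (simp add: nn_integral_cmult)
  also have "\<dots> = (\<integral>\<^sup>+x. \<integral>\<^sup>+z. G x z * (\<integral>\<^sup>+u. f (m x z + u) \<partial>normal_law 0 (k1\<^sup>2 * v1 + k2\<^sup>2 * v2))
            \<partial>normal_law 0 w2 \<partial>normal_law 0 w1)"
    by (simp add: nn_integral_normal_law_linear_comb[OF v1 v2 k1 k2])
  finally show ?thesis .
qed

text \<open>Integration against the joint law of the block sums \<open>(a1, a2, a3)\<close> of \<open>A\<close> and
  \<open>(b1, b2, b3)\<close> of \<open>B\<close> over consecutive blocks ending at \<open>r1 < r2 < r3\<close>.\<close>
definition increments_integral ::
    "real \<Rightarrow> real \<Rightarrow> real \<Rightarrow> real \<Rightarrow> (real \<times> real \<times> real \<Rightarrow> real \<times> real \<times> real \<Rightarrow> ennreal) \<Rightarrow> ennreal"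
  where "increments_integral q r1 r2 r3 F =
    (\<integral>\<^sup>+a1. \<integral>\<^sup>+a2. \<integral>\<^sup>+a3. \<integral>\<^sup>+b1. \<integral>\<^sup>+b2. \<integral>\<^sup>+b3. F (a1, a2, a3) (b1, b2, b3)
      \<partial>normal_law 0 ((r3 - r2) * (1 - q)) \<partial>normal_law 0 ((r2 - r1) * (1 - q)) \<partial>normal_law 0 (r1 * (1 - q))
      \<partial>normal_law 0 ((r3 - r2) * q) \<partial>normal_law 0 ((r2 - r1) * q) \<partial>normal_law 0 (r1 * q))"

lemma increments_integral_conditional_law:
  fixes G :: "real \<times> real \<times> real \<Rightarrow> ennreal" and f :: "real \<Rightarrow> ennreal"
  assumes G[measurable]: "G \<in> borel_measurable borel"
    and f[measurable]: "f \<in> borel_measurable borel"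
    and q: "0 < q" "q < 1" and r: "0 < r1" "r1 < r2" "r2 < r3" and sa: "0 < sa" and c: "0 < c"
    and V: "V = (sa / r1)\<^sup>2 * (r1 * q * ((r2 - r1) * q) / (r1 * q + (r2 - r1) * q)) + (sa * c)\<^sup>2 * ((r2 - r1) * (1 - q))"
  shows "increments_integral q r1 r2 r3 (\<lambda>(a1, a2, a3) (b1, b2, b3).
      G (a1 + a2, a3, b3) * f (sa * (a1 / r1 - (a1 + a2 + a3) / r3 + c * (b2 + b3)))) =
    increments_integral q r1 r2 r3 (\<lambda>(a1, a2, a3) (b1, b2, b3).
      G (a1 + a2, a3, b3) * (\<integral>\<^sup>+x. f (sa * ((a1 + a2) / r2 - (a1 + a2 + a3) / r3 + c * b3) + x) \<partial>normal_law 0 V))"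
  (is "?L = ?R")
proof -
  define A where "A = r1 * q"
  define B where "B = (r2 - r1) * q"
  define A3 where "A3 = (r3 - r2) * q"
  define B2 where "B2 = (r2 - r1) * (1 - q)"
  define B3 where "B3 = (r3 - r2) * (1 - q)"
  define v where "v = A * B / (A + B)"
  have "0 < A" "0 < B" using q r by (simp_all add: A_def B_def)
  then have pos: "0 < A" "0 < B" "0 < B2" "0 < v"
    using q r by (simp_all add: B2_def v_def)
  have nz: "r1 * (1 - q) \<noteq> 0" "B2 \<noteq> 0" using q r pos by auto
  define m where "m = (\<lambda>s x z. sa * (s / r2 - (s + x) / r3 + c * z))"
  define F where "F = (\<lambda>s y. \<integral>\<^sup>+x. \<integral>\<^sup>+w. \<integral>\<^sup>+z.
        G (s, x, z) * f (sa * (y / r1 - (s + x) / r3 + c * (w + z)))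
      \<partial>normal_law 0 B3 \<partial>normal_law 0 B2 \<partial>normal_law 0 A3)"
  define F' where "F' = (\<lambda>s. \<integral>\<^sup>+x. \<integral>\<^sup>+z. G (s, x, z) * (\<integral>\<^sup>+u. f (m s x z + u) \<partial>normal_law 0 V)
      \<partial>normal_law 0 B3 \<partial>normal_law 0 A3)"
  have "?L = (\<integral>\<^sup>+a1. \<integral>\<^sup>+a2. F (a1 + a2) a1 \<partial>normal_law 0 B \<partial>normal_law 0 A)"
    using nz by (simp add: increments_integral_def F_def A_def B_def A3_def B2_def B3_def add.assoc)
  also have "\<dots> = (\<integral>\<^sup>+s. \<integral>\<^sup>+e. F s (e + A / (A + B) * s) \<partial>normal_law 0 v \<partial>normal_law 0 (A + B))"
    unfolding v_def by (rule nn_integral_normal_law_disintegrate_sum[OF pos(1,2)]) (unfold F_def, measurable)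
  also have "\<dots> = (\<integral>\<^sup>+s. F' s \<partial>normal_law 0 (A + B))"
  proof (rule nn_integral_cong)
    fix s
    text \<open>Given the sum \<open>s\<close> of the first two increments, the first one is \<open>r1 / r2 * s\<close> plus
      independent noise \<open>e\<close> of variance \<open>v\<close>.\<close>
    have ratio: "A / (A + B) = r1 / r2" using q r by (simp add: A_def B_def field_simps)
    have "sa * ((e + r1 / r2 * s) / r1 - (s + x) / r3 + c * (w + z)) = (sa / r1) * e + (sa * c) * w + m s x z"
      for e x w z using r by (simp add: m_def field_simps)
    then have F_shift: "F s (e + A / (A + B) * s) = (\<integral>\<^sup>+x. \<integral>\<^sup>+w. \<integral>\<^sup>+z.
        G (s, x, z) * f ((sa / r1) * e + (sa * c) * w + m s x z)
      \<partial>normal_law 0 B3 \<partial>normal_law 0 B2 \<partial>normal_law 0 A3)" for e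
      unfolding F_def ratio by simp
    have V_split: "V = (sa / r1)\<^sup>2 * v + (sa * c)\<^sup>2 * B2"
      by (simp add: V v_def A_def B_def B2_def)
    show "(\<integral>\<^sup>+e. F s (e + A / (A + B) * s) \<partial>normal_law 0 v) = F' s"
      unfolding F'_def F_shift V_split
      using sa c r by (intro nn_integral_normal_law_integrate_out[OF pos(4,3)]) (simp_all add: m_def)
  qed
  also have "\<dots> = (\<integral>\<^sup>+a1. \<integral>\<^sup>+a2. F' (a1 + a2) \<partial>normal_law 0 B \<partial>normal_law 0 A)"
    by (rule nn_integral_normal_law_add[OF pos(1,2), symmetric]) (unfold F'_def m_def, measurable)
  also have "\<dots> = ?R"
    using nz by (simp add: increments_integral_def F'_def m_def A_def B_def A3_def B2_def B3_def)
  finally show ?thesis .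
qed

lemma product_prob_space_normal_law: "0 < s \<Longrightarrow> product_prob_space (\<lambda>_. normal_law 0 s)"
  by (intro product_prob_space.intro product_sigma_finite.intro product_prob_space_axioms.intro
      sigma_finite_normal_law prob_space_normal_law, simp)

lemma nn_integral_PiM_normal_sum:
  assumes "finite I" "I \<noteq> {}" and s: "0 < s" and h: "h \<in> borel_measurable borel"
  shows "(\<integral>\<^sup>+z. h (\<Sum>i\<in>I. z i) \<partial>PiM I (\<lambda>_. normal_law 0 s)) = (\<integral>\<^sup>+u. h u \<partial>normal_law 0 (real (card I) * s))"
  using assms(1,2) h
proof (induction I arbitrary: h rule: finite_ne_induct)
  case (singleton i)
  interpret product_prob_space "\<lambda>_. normal_law 0 s" by (rule product_prob_space_normal_law[OF s])
  show ?case using singleton by (simp add: product_nn_integral_singleton)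
next
  case (insert i I)
  note [measurable] = insert.prems
  interpret product_prob_space "\<lambda>_. normal_law 0 s" by (rule product_prob_space_normal_law[OF s])
  have cI: "0 < real (card I) * s" using insert s by (simp add: card_gt_0_iff)
  have "(\<integral>\<^sup>+z. h (\<Sum>j\<in>insert i I. z j) \<partial>PiM (insert i I) (\<lambda>_. normal_law 0 s)) =
        (\<integral>\<^sup>+x. \<integral>\<^sup>+y. h (\<Sum>j\<in>insert i I. (x(i := y)) j) \<partial>normal_law 0 s \<partial>PiM I (\<lambda>_. normal_law 0 s))"
    by (rule product_nn_integral_insert) (use insert in auto)
  also have "\<dots> = (\<integral>\<^sup>+x. (\<lambda>w. \<integral>\<^sup>+y. h (w + y) \<partial>normal_law 0 s) (\<Sum>j\<in>I. x j) \<partial>PiM I (\<lambda>_. normal_law 0 s))"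
  proof (rule nn_integral_cong)
    fix x :: "'a \<Rightarrow> real" assume "x \<in> space (PiM I (\<lambda>_. normal_law 0 s))"
    have "(\<Sum>j\<in>insert i I. (x(i := y)) j) = (\<Sum>j\<in>I. x j) + y" for y
      using insert by (simp add: add.commute) (rule sum.cong, auto)
    then show "(\<integral>\<^sup>+y. h (\<Sum>j\<in>insert i I. (x(i := y)) j) \<partial>normal_law 0 s) = (\<lambda>w. \<integral>\<^sup>+y. h (w + y) \<partial>normal_law 0 s) (\<Sum>j\<in>I. x j)"
      by simp
  qed
  also have "\<dots> = (\<integral>\<^sup>+w. \<integral>\<^sup>+y. h (w + y) \<partial>normal_law 0 s \<partial>normal_law 0 (real (card I) * s))"
    by (rule insert.IH) simp
  also have "\<dots> = (\<integral>\<^sup>+u. h u \<partial>normal_law 0 (real (card I) * s + s))"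
    by (rule nn_integral_normal_law_add[OF cI s]) simp
  finally show ?case using insert by (simp add: algebra_simps)
qed

lemma nn_integral_PiM_normal_fold_sums:
  fixes h :: "real \<times> real \<times> real \<Rightarrow> ennreal"
  assumes IJ: "I \<inter> J = {}" "finite I" "finite J" and sub: "I1 \<subseteq> I" "J2 \<subseteq> J" "J3 \<subseteq> J"
    and s: "0 < s" and h[measurable]: "h \<in> borel_measurable borel"
  shows "(\<integral>\<^sup>+z. h (\<Sum>i\<in>I1. z i, \<Sum>i\<in>J2. z i, \<Sum>i\<in>J3. z i) \<partial>PiM (I \<union> J) (\<lambda>_. normal_law 0 s)) =
         (\<integral>\<^sup>+x. \<integral>\<^sup>+y. h (\<Sum>i\<in>I1. x i, \<Sum>i\<in>J2. y i, \<Sum>i\<in>J3. y i) \<partial>PiM J (\<lambda>_. normal_law 0 s) \<partial>PiM I (\<lambda>_. normal_law 0 s))"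
proof -
  interpret product_prob_space "\<lambda>_. normal_law 0 s" by (rule product_prob_space_normal_law[OF s])
  show ?thesis
  proof (subst product_nn_integral_fold[OF IJ], goal_cases)
    case 1
    let ?P = "PiM (I \<union> J) (\<lambda>_. normal_law 0 s)"
    have [measurable]: "(\<lambda>x. \<Sum>i\<in>I1. x i) \<in> borel_measurable ?P"
      "(\<lambda>x. \<Sum>i\<in>J2. x i) \<in> borel_measurable ?P" "(\<lambda>x. \<Sum>i\<in>J3. x i) \<in> borel_measurable ?P"
      using sub by (intro borel_measurable_sum; auto)+
    show ?case by measurable
  next
    case 2
    have merge_I: "(\<Sum>i\<in>A. merge I J (x, y) i) = (\<Sum>i\<in>A. x i)" if "A \<subseteq> I" for A x y
      using that by (intro sum.cong) (auto simp: merge_def)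
    have merge_J: "(\<Sum>i\<in>A. merge I J (x, y) i) = (\<Sum>i\<in>A. y i)" if "A \<subseteq> J" for A x y
      using that IJ by (intro sum.cong) (auto simp: merge_def)
    show ?case
      by (simp add: merge_I[OF sub(1)] merge_J[OF sub(2)] merge_J[OF sub(3)])
  qed
qed

lemma emeasure_PiM_normal_law_space[simp]:
  "0 < s \<Longrightarrow> emeasure (PiM J (\<lambda>_. normal_law 0 s)) (space (PiM J (\<lambda>_. normal_law 0 s))) = 1"
proof -
  assume s: "0 < s"
  interpret prob_space "PiM J (\<lambda>_. normal_law 0 s)"
    by (rule prob_space_PiM) (rule prob_space_normal_law, use s in simp)
  show ?thesis by (simp add: emeasure_space_1)
qed

lemma nn_integral_PiM_normal_disjoint_sums:
  fixes h :: "real \<times> real \<times> real \<Rightarrow> ennreal"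
  assumes K: "finite K" and sub: "I1 \<subseteq> K" "I2 \<subseteq> K" "I3 \<subseteq> K"
    and disj: "I1 \<inter> I2 = {}" "I1 \<inter> I3 = {}" "I2 \<inter> I3 = {}" and s: "0 < s"
    and h[measurable]: "h \<in> borel_measurable borel"
  shows "(\<integral>\<^sup>+z. h (\<Sum>i\<in>I1. z i, \<Sum>i\<in>I2. z i, \<Sum>i\<in>I3. z i) \<partial>PiM K (\<lambda>_. normal_law 0 s)) =
    (\<integral>\<^sup>+x1. \<integral>\<^sup>+x2. \<integral>\<^sup>+x3. h (\<Sum>i\<in>I1. x1 i, \<Sum>i\<in>I2. x2 i, \<Sum>i\<in>I3. x3 i)
      \<partial>PiM I3 (\<lambda>_. normal_law 0 s) \<partial>PiM I2 (\<lambda>_. normal_law 0 s) \<partial>PiM I1 (\<lambda>_. normal_law 0 s))"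
proof -
  let ?M = "\<lambda>A. PiM A (\<lambda>_. normal_law 0 s)"
  have fin: "finite I1" "finite I2" "finite I3" using K sub by (auto intro: finite_subset)
  have e1: "K = I1 \<union> (K - I1)" using sub by auto
  have e2: "K - I1 = I2 \<union> (K - I1 - I2)" using sub disj by auto
  have e3: "K - I1 - I2 = I3 \<union> (K - I1 - I2 - I3)" using sub disj by auto
  have fold_I1: "(\<integral>\<^sup>+z. h (\<Sum>i\<in>I1. z i, \<Sum>i\<in>I2. z i, \<Sum>i\<in>I3. z i) \<partial>?M K) =
     (\<integral>\<^sup>+x. \<integral>\<^sup>+y. h (\<Sum>i\<in>I1. x i, \<Sum>i\<in>I2. y i, \<Sum>i\<in>I3. y i) \<partial>?M (K - I1) \<partial>?M I1)"
    by (subst e1, rule nn_integral_PiM_normal_fold_sums) (use K fin sub disj s in auto)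
  have fold_I2: "(\<integral>\<^sup>+y. h (c, \<Sum>i\<in>I2. y i, \<Sum>i\<in>I3. y i) \<partial>?M (K - I1)) =
     (\<integral>\<^sup>+x. \<integral>\<^sup>+y. h (c, \<Sum>i\<in>I2. x i, \<Sum>i\<in>I3. y i) \<partial>?M (K - I1 - I2) \<partial>?M I2)" for c
  proof -
    have "(\<integral>\<^sup>+z. (\<lambda>p. h (c, fst p, fst (snd p))) (\<Sum>i\<in>I2. z i, \<Sum>i\<in>I3. z i, \<Sum>i\<in>I3. z i)
        \<partial>?M (I2 \<union> (K - I1 - I2))) =
      (\<integral>\<^sup>+x. \<integral>\<^sup>+y. (\<lambda>p. h (c, fst p, fst (snd p))) (\<Sum>i\<in>I2. x i, \<Sum>i\<in>I3. y i, \<Sum>i\<in>I3. y i)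
        \<partial>?M (K - I1 - I2) \<partial>?M I2)"
      by (rule nn_integral_PiM_normal_fold_sums) (use K fin sub disj s in auto)
    then show ?thesis by (simp only: e2[symmetric] fst_conv snd_conv)
  qed
  have fold_I3: "(\<integral>\<^sup>+y. h (c, d, \<Sum>i\<in>I3. y i) \<partial>?M (K - I1 - I2)) =
     (\<integral>\<^sup>+x. h (c, d, \<Sum>i\<in>I3. x i) \<partial>?M I3)" for c d
  proof -
    have "(\<integral>\<^sup>+z. (\<lambda>p. h (c, d, fst p)) (\<Sum>i\<in>I3. z i, \<Sum>i\<in>{}. z i, \<Sum>i\<in>{}. z i)
        \<partial>?M (I3 \<union> (K - I1 - I2 - I3))) =
      (\<integral>\<^sup>+x. \<integral>\<^sup>+y. (\<lambda>p. h (c, d, fst p)) (\<Sum>i\<in>I3. x i, \<Sum>i\<in>{}. y i, \<Sum>i\<in>{}. y i)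
        \<partial>?M (K - I1 - I2 - I3) \<partial>?M I3)"
      by (rule nn_integral_PiM_normal_fold_sums) (use K fin sub disj s in auto)
    then show ?thesis using s by (simp only: e3[symmetric] fst_conv) simp
  qed
  show ?thesis
    unfolding fold_I1 fold_I2 fold_I3 ..
qed

lemma nn_integral_PiM_normal_three_sums:
  fixes h :: "real \<times> real \<times> real \<Rightarrow> ennreal"
  assumes K: "finite K" and sub: "I1 \<subseteq> K" "I2 \<subseteq> K" "I3 \<subseteq> K"
    and disj: "I1 \<inter> I2 = {}" "I1 \<inter> I3 = {}" "I2 \<inter> I3 = {}"
    and ne: "I1 \<noteq> {}" "I2 \<noteq> {}" "I3 \<noteq> {}" and s: "0 < s"
    and h[measurable]: "h \<in> borel_measurable borel"
  shows "(\<integral>\<^sup>+z. h (\<Sum>i\<in>I1. z i, \<Sum>i\<in>I2. z i, \<Sum>i\<in>I3. z i) \<partial>PiM K (\<lambda>_. normal_law 0 s)) =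
    (\<integral>\<^sup>+u1. \<integral>\<^sup>+u2. \<integral>\<^sup>+u3. h (u1, u2, u3) \<partial>normal_law 0 (real (card I3) * s)
        \<partial>normal_law 0 (real (card I2) * s) \<partial>normal_law 0 (real (card I1) * s))"
proof -
  let ?N = "\<lambda>A. normal_law 0 (real (card A) * s)"
  have fin: "finite I1" "finite I2" "finite I3" using K sub by (auto intro: finite_subset)
  have "(\<integral>\<^sup>+z. h (\<Sum>i\<in>I1. z i, \<Sum>i\<in>I2. z i, \<Sum>i\<in>I3. z i) \<partial>PiM K (\<lambda>_. normal_law 0 s)) =
    (\<integral>\<^sup>+x1. \<integral>\<^sup>+x2. \<integral>\<^sup>+u3. h (\<Sum>i\<in>I1. x1 i, \<Sum>i\<in>I2. x2 i, u3) \<partial>?N I3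
      \<partial>PiM I2 (\<lambda>_. normal_law 0 s) \<partial>PiM I1 (\<lambda>_. normal_law 0 s))"
    unfolding nn_integral_PiM_normal_disjoint_sums[OF K sub disj s h]
    using fin ne s by (intro nn_integral_cong nn_integral_PiM_normal_sum[where h="\<lambda>u3. h (_, _, u3)"]) auto
  also have "\<dots> = (\<integral>\<^sup>+x1. \<integral>\<^sup>+u2. \<integral>\<^sup>+u3. h (\<Sum>i\<in>I1. x1 i, u2, u3) \<partial>?N I3 \<partial>?N I2
      \<partial>PiM I1 (\<lambda>_. normal_law 0 s))"
    using fin ne s by (subst nn_integral_PiM_normal_sum[where h="\<lambda>u2. \<integral>\<^sup>+u3. h (_, u2, u3) \<partial>?N I3"]) auto
  also have "\<dots> = (\<integral>\<^sup>+u1. \<integral>\<^sup>+u2. \<integral>\<^sup>+u3. h (u1, u2, u3) \<partial>?N I3 \<partial>?N I2 \<partial>?N I1)"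
    using fin ne s by (subst nn_integral_PiM_normal_sum[where h="\<lambda>u1. \<integral>\<^sup>+u2. \<integral>\<^sup>+u3. h (u1, u2, u3) \<partial>?N I3 \<partial>?N I2"]) auto
  finally show ?thesis .
qed

definition block_sums :: "nat \<Rightarrow> nat \<Rightarrow> nat \<Rightarrow> (nat \<Rightarrow> real) \<Rightarrow> real \<times> real \<times> real" where
  "block_sums k1 k2 k3 z = (\<Sum>i\<in>{1..k1}. z i, \<Sum>i\<in>{k1<..k2}. z i, \<Sum>i\<in>{k2<..k3}. z i)"

lemma borel_measurable_PiM_sum:
  "I \<subseteq> K \<Longrightarrow> (\<lambda>z. \<Sum>i\<in>I. z i) \<in> borel_measurable (PiM K (\<lambda>_. normal_law 0 s))"
  by (intro borel_measurable_sum) auto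

lemma borel_measurable_block_sums:
  assumes "k1 \<le> k2" "k2 \<le> k3" "k3 \<le> N"
  shows "block_sums k1 k2 k3 \<in> borel_measurable (PiM {1..N} (\<lambda>_. normal_law 0 s))"
  unfolding block_sums_def using assms
  by (intro borel_measurable_Pair borel_measurable_PiM_sum; auto)

lemma nn_integral_PiM_normal_block_sums:
  fixes h :: "real \<times> real \<times> real \<Rightarrow> ennreal"
  assumes k: "0 < k1" "k1 < k2" "k2 < k3" "k3 \<le> N" and s: "0 < s" and h[measurable]: "h \<in> borel_measurable borel"
  shows "(\<integral>\<^sup>+z. h (block_sums k1 k2 k3 z) \<partial>PiM {1..N} (\<lambda>_. normal_law 0 s)) =
    (\<integral>\<^sup>+u1. \<integral>\<^sup>+u2. \<integral>\<^sup>+u3. h (u1, u2, u3) \<partial>normal_law 0 ((real k3 - real k2) * s)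
        \<partial>normal_law 0 ((real k2 - real k1) * s) \<partial>normal_law 0 (real k1 * s))"
proof -
  have sets: "{1..k1} \<subseteq> {1..N}" "{k1<..k2} \<subseteq> {1..N}" "{k2<..k3} \<subseteq> {1..N}"
    "{1..k1} \<inter> {k1<..k2} = {}" "{1..k1} \<inter> {k2<..k3} = {}" "{k1<..k2} \<inter> {k2<..k3} = {}"
    "{1..k1} \<noteq> {}" "{k1<..k2} \<noteq> {}" "{k2<..k3} \<noteq> {}"
    using k by auto
  show ?thesis
    unfolding block_sums_def using nn_integral_PiM_normal_three_sums[OF _ sets s h] k by (simp add: of_nat_diff)
qed

lemma Omega_eq_normal_law:
  "Omega N q = lborel \<Otimes>\<^sub>M (PiM {1..N} (\<lambda>_. normal_law 0 q) \<Otimes>\<^sub>M PiM {1..N} (\<lambda>_. normal_law 0 (1 - q)))"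
  unfolding Omega_def normal_law_def ..

lemma sum_atLeastAtMost_split:
  fixes f :: "nat \<Rightarrow> real"
  assumes "m \<le> n"
  shows "(\<Sum>i\<in>{1..n}. f i) = (\<Sum>i\<in>{1..m}. f i) + (\<Sum>i\<in>{m<..n}. f i)"
proof -
  have "{1..n} = {1..m} \<union> {m<..n}" using assms by auto
  then show ?thesis by (simp add: sum.union_disjoint ivl_disj_int)
qed

lemma Xp_Yp_block_sums:
  assumes A: "block_sums k1 k2 k3 za = (a1, a2, a3)" and B: "block_sums k1 k2 k3 zb = (b1, b2, b3)"
    and le: "k1 \<le> k2" "k2 \<le> k3"
  shows "Xp k1 (x0, za, zb) = x0 + a1 + b1" "Yp k1 (x0, za, zb) = x0 + b1"
    "Xp k2 (x0, za, zb) = x0 + (a1 + a2) + (b1 + b2)" "Yp k2 (x0, za, zb) = x0 + (b1 + b2)"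
    "Xp k3 (x0, za, zb) = x0 + (a1 + a2 + a3) + (b1 + b2 + b3)" "Yp k3 (x0, za, zb) = x0 + (b1 + b2 + b3)"
proof -
  have a: "a1 = (\<Sum>i\<in>{1..k1}. za i)" "a2 = (\<Sum>i\<in>{k1<..k2}. za i)" "a3 = (\<Sum>i\<in>{k2<..k3}. za i)"
    using A by (auto simp: block_sums_def)
  have b: "b1 = (\<Sum>i\<in>{1..k1}. zb i)" "b2 = (\<Sum>i\<in>{k1<..k2}. zb i)" "b3 = (\<Sum>i\<in>{k2<..k3}. zb i)"
    using B by (auto simp: block_sums_def)
  have s2: "(\<Sum>i\<in>{1..k2}. z i) = (\<Sum>i\<in>{1..k1}. z i) + (\<Sum>i\<in>{k1<..k2}. z i)" for z :: "nat \<Rightarrow> real"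
    using le(1) by (rule sum_atLeastAtMost_split)
  have s3: "(\<Sum>i\<in>{1..k3}. z i) = (\<Sum>i\<in>{1..k1}. z i) + (\<Sum>i\<in>{k1<..k2}. z i) + (\<Sum>i\<in>{k2<..k3}. z i)"
    for z :: "nat \<Rightarrow> real"
    using sum_atLeastAtMost_split[OF le(2), of z] s2[of z] by simp
  show "Xp k1 (x0, za, zb) = x0 + a1 + b1" "Yp k1 (x0, za, zb) = x0 + b1"
    "Xp k2 (x0, za, zb) = x0 + (a1 + a2) + (b1 + b2)" "Yp k2 (x0, za, zb) = x0 + (b1 + b2)"
    "Xp k3 (x0, za, zb) = x0 + (a1 + a2 + a3) + (b1 + b2 + b3)" "Yp k3 (x0, za, zb) = x0 + (b1 + b2 + b3)"
    unfolding Xp_def Yp_def a b fst_conv snd_conv sum.distrib s2 s3 by (simp_all add: algebra_simps)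
qed

text \<open>The improper flat prior on \<open>X0\<close> is translation invariant, so \<open>X0\<close> may be traded for \<open>Y_k2\<close>.\<close>
lemma nn_integral_Omega_block_sums:
  fixes \<Phi> :: "real \<times> (real \<times> real \<times> real) \<times> (real \<times> real \<times> real) \<Rightarrow> ennreal"
  assumes \<Phi>[measurable]: "\<Phi> \<in> borel_measurable borel"
    and q: "0 < q" "q < 1" and k: "0 < k1" "k1 < k2" "k2 < k3" "k3 \<le> N"
  shows "(\<integral>\<^sup>+\<omega>. \<Phi> (Yp k2 \<omega>, block_sums k1 k2 k3 (fst (snd \<omega>)), block_sums k1 k2 k3 (snd (snd \<omega>))) \<partial>Omega N q) =
    (\<integral>\<^sup>+u. increments_integral q k1 k2 k3 (\<lambda>a b. \<Phi> (u, a, b)) \<partial>lborel)"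
proof -
  define PA where "PA = PiM {1..N} (\<lambda>_. normal_law 0 q)"
  define PB where "PB = PiM {1..N} (\<lambda>_. normal_law 0 (1 - q))"
  define S where "S = block_sums k1 k2 k3"
  have q': "0 < 1 - q" using q by simp
  interpret PA: prob_space PA unfolding PA_def by (rule prob_space_PiM) (rule prob_space_normal_law, use q in simp)
  interpret PB: prob_space PB unfolding PB_def by (rule prob_space_PiM) (rule prob_space_normal_law, use q in simp)
  interpret PAB: pair_prob_space PA PB ..
  interpret LP: pair_sigma_finite lborel "PA \<Otimes>\<^sub>M PB"
    by (intro pair_sigma_finite.intro lborel.sigma_finite_measure_axioms PAB.P.sigma_finite_measure_axioms)
  have [measurable]: "S \<in> borel_measurable PA" "S \<in> borel_measurable PB"
    unfolding PA_def PB_def S_def using k by (intro borel_measurable_block_sums; simp)+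
  have Yp: "Yp k2 \<omega> = fst \<omega> + (fst (S (snd (snd \<omega>))) + fst (snd (S (snd (snd \<omega>)))))" for \<omega>
    using k Xp_Yp_block_sums(4)[of k1 k2 k3 "fst (snd \<omega>)" _ _ _ "snd (snd \<omega>)" _ _ _ "fst \<omega>"]
    by (cases "S (fst (snd \<omega>))", cases "S (snd (snd \<omega>))") (simp add: S_def)
  have translate: "(\<integral>\<^sup>+x. \<Phi> (x + d, A, B) \<partial>lborel) = (\<integral>\<^sup>+u. \<Phi> (u, A, B) \<partial>lborel)" for d A B
    using nn_integral_real_affine[of "\<lambda>u. \<Phi> (u, A, B)" 1 d] by (simp add: add.commute)
  have "(\<integral>\<^sup>+\<omega>. \<Phi> (Yp k2 \<omega>, S (fst (snd \<omega>)), S (snd (snd \<omega>))) \<partial>Omega N q) =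
        (\<integral>\<^sup>+p. \<integral>\<^sup>+x. \<Phi> (x + (fst (S (snd p)) + fst (snd (S (snd p)))), S (fst p), S (snd p)) \<partial>lborel \<partial>(PA \<Otimes>\<^sub>M PB))"
    unfolding Yp Omega_eq_normal_law PA_def[symmetric] PB_def[symmetric]
    by (subst LP.nn_integral_snd[symmetric]) measurable
  also have "\<dots> = (\<integral>\<^sup>+p. \<integral>\<^sup>+u. \<Phi> (u, S (fst p), S (snd p)) \<partial>lborel \<partial>(PA \<Otimes>\<^sub>M PB))"
    by (simp add: translate)
  also have "\<dots> = (\<integral>\<^sup>+u. \<integral>\<^sup>+za. \<integral>\<^sup>+zb. \<Phi> (u, S za, S zb) \<partial>PB \<partial>PA \<partial>lborel)"
    by (subst LP.Fubini', measurable) (intro nn_integral_cong, subst PB.nn_integral_fst[symmetric], measurable)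
  also have "\<dots> = (\<integral>\<^sup>+u. increments_integral q k1 k2 k3 (\<lambda>a b. \<Phi> (u, a, b)) \<partial>lborel)"
    unfolding PA_def PB_def S_def increments_integral_def
    by (intro nn_integral_cong, subst nn_integral_PiM_normal_block_sums[OF k q'], measurable,
        subst nn_integral_PiM_normal_block_sums[OF k q(1)], measurable)
  finally show ?thesis unfolding S_def .
qed

lemma sigma2_pos: "0 < q \<Longrightarrow> q < 1 \<Longrightarrow> 0 < s \<Longrightarrow> 0 < T \<Longrightarrow> 0 < sigma2 q T s"
  unfolding sigma2_def by (simp add: add_pos_pos)

lemma xstar_minus_eq:
  assumes q: "0 < q" "q < 1" and "0 < s" "0 < T"
  shows "xstar q T s x yT xT - y =
    sigma2 q T s * ((x - y) / real s - (xT - yT) / real T + q / ((1 - q) * real T) * (yT - y))"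
proof -
  define D where "D = 1 / real s + q / (1 - q) * (1 / real T)"
  define Num where "Num = x / real s + 1 / (1 - q) * (yT / real T) - xT / real T"
  define E where "E = (x - y) / real s - (xT - yT) / real T + q / ((1 - q) * real T) * (yT - y)"
  define w where "w = 1 - q"
  have D: "D \<noteq> 0" using sigma2_pos[OF assms] by (simp add: sigma2_def D_def)
  have w: "w \<noteq> 0" and q_eq: "q = 1 - w" using assms by (auto simp: w_def)
  have "Num - y * D = E"
    using w assms(3,4) unfolding D_def Num_def E_def w_def[symmetric] q_eq by (simp add: field_simps)
  then have "Num / D - y = 1 / D * E"
    using D by (simp add: field_simps)
  then show ?thesis
    unfolding xstar_def sigma2_def D_def[symmetric] Num_def[symmetric] E_def[symmetric] .
qed

lemma Z_and_conditional_mean_block_sums: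
  assumes A: "block_sums \<tau> t T (fst (snd \<omega>)) = (a1, a2, a3)" and B: "block_sums \<tau> t T (snd (snd \<omega>)) = (b1, b2, b3)"
    and q: "0 < q" "q < 1" and k: "0 < \<tau>" "\<tau> < t" "t < T"
  shows "Xp t \<omega> = Yp t \<omega> + (a1 + a2)" "Yp T \<omega> = Yp t \<omega> + b3" "Xp T \<omega> = Yp t \<omega> + (a1 + a2) + a3 + b3"
    "Xstar q T \<tau> \<omega> - Yp \<tau> \<omega> =
       sigma2 q T \<tau> * (a1 / real \<tau> - (a1 + a2 + a3) / real T + q / ((1 - q) * real T) * (b2 + b3))"
    "sigma2 q T \<tau> / sigma2 q T t * (xstar q T t (Xp t \<omega>) (Yp T \<omega>) (Xp T \<omega>) - Yp t \<omega>) =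
       sigma2 q T \<tau> * ((a1 + a2) / real t - (a1 + a2 + a3) / real T + q / ((1 - q) * real T) * b3)"
proof -
  obtain x0 za zb where \<omega>: "\<omega> = (x0, za, zb)" by (cases \<omega>) auto
  note paths = Xp_Yp_block_sums[OF A[unfolded \<omega>, simplified] B[unfolded \<omega>, simplified], of x0]
  have "sigma2 q T t \<noteq> 0" using sigma2_pos[OF q, of t T] k by simp
  then show "Xp t \<omega> = Yp t \<omega> + (a1 + a2)" "Yp T \<omega> = Yp t \<omega> + b3" "Xp T \<omega> = Yp t \<omega> + (a1 + a2) + a3 + b3"
    "Xstar q T \<tau> \<omega> - Yp \<tau> \<omega> =
       sigma2 q T \<tau> * (a1 / real \<tau> - (a1 + a2 + a3) / real T + q / ((1 - q) * real T) * (b2 + b3))"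
    "sigma2 q T \<tau> / sigma2 q T t * (xstar q T t (Xp t \<omega>) (Yp T \<omega>) (Xp T \<omega>) - Yp t \<omega>) =
       sigma2 q T \<tau> * ((a1 + a2) / real t - (a1 + a2 + a3) / real T + q / ((1 - q) * real T) * b3)"
    using k unfolding \<omega> Xstar_def by (simp_all add: paths xstar_minus_eq[OF q])
qed

lemma conditional_variance_split:
  assumes q: "0 < q" "q < 1" and k: "0 < \<tau>" "\<tau> < t" "t < T"
  shows "q * (real t - real \<tau>) * (1 / (real t * real \<tau>) + q / ((1 - q) * (real T)\<^sup>2)) * (sigma2 q T \<tau>)\<^sup>2 =
    (sigma2 q T \<tau> / real \<tau>)\<^sup>2 * (real \<tau> * q * ((real t - real \<tau>) * q) / (real \<tau> * q + (real t - real \<tau>) * q)) +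
    (sigma2 q T \<tau> * (q / ((1 - q) * real T)))\<^sup>2 * ((real t - real \<tau>) * (1 - q))"
proof -
  define w where "w = 1 - q"
  have "w \<noteq> 0" "0 < real \<tau>" "real \<tau> < real t" "0 < real T" using q k by (auto simp: w_def)
  then have "q * (real t - real \<tau>) * (1 / (real t * real \<tau>) + q / (w * (real T)\<^sup>2)) =
      (1 / real \<tau>)\<^sup>2 * (real \<tau> * q * ((real t - real \<tau>) * q) / (real t * q)) +
      (q / (w * real T))\<^sup>2 * ((real t - real \<tau>) * w)"
    using q by (simp add: field_simps power2_eq_square)
  moreover have "real \<tau> * q + (real t - real \<tau>) * q = real t * q" by (simp add: algebra_simps)
  ultimately show ?thesis unfolding w_def[symmetric] by (simp add: power_mult_distrib power_divide algebra_simps)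
qed

theorem lemma8:
  fixes Tmax \<tau> t T :: nat and q :: real
    and f :: "real \<Rightarrow> ennreal"
    and g :: "real \<times> real \<times> real \<times> real \<Rightarrow> ennreal"
  assumes "1 \<le> Tmax" and "0 < q" and "q < 1"
    and "0 < \<tau>" and "\<tau> < t" and "t < T" and "T \<le> Tmax"
    and "f \<in> borel_measurable borel" and "g \<in> borel_measurable borel"
  shows "(\<integral>\<^sup>+ \<omega>. g (Xp t \<omega>, Yp t \<omega>, Xp T \<omega>, Yp T \<omega>) * f (Xstar q T \<tau> \<omega> - Yp \<tau> \<omega>) \<partial>Omega Tmax q)
       = (\<integral>\<^sup>+ \<omega>. g (Xp t \<omega>, Yp t \<omega>, Xp T \<omega>, Yp T \<omega>) *
            (\<integral>\<^sup>+ z. f z \<partial>normal_law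
               (sigma2 q T \<tau> / sigma2 q T t * (xstar q T t (Xp t \<omega>) (Yp T \<omega>) (Xp T \<omega>) - Yp t \<omega>))
               (q * (real t - real \<tau>) * (1 / (real t * real \<tau>) + q / ((1 - q) * (real T)\<^sup>2))
                  * (sigma2 q T \<tau>)\<^sup>2))
          \<partial>Omega Tmax q)"
proof -
  note [measurable] = assms(8,9)
  have q: "0 < q" "q < 1" and k: "0 < \<tau>" "\<tau> < t" "t < T" "T \<le> Tmax" using assms by auto
  define V where "V = q * (real t - real \<tau>) * (1 / (real t * real \<tau>) + q / ((1 - q) * (real T)\<^sup>2))
    * (sigma2 q T \<tau>)\<^sup>2"
  define sa where "sa = sigma2 q T \<tau>"
  define c where "c = q / ((1 - q) * real T)"
  define \<Phi>L where "\<Phi>L = (\<lambda>(u, (a1, a2, a3), (b1 :: real, b2 :: real, b3)).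
    g (u + (a1 + a2), u, u + (a1 + a2) + a3 + b3, u + b3) *
    f (sa * (a1 / real \<tau> - (a1 + a2 + a3) / real T + c * (b2 + b3))))"
  define \<Phi>R where "\<Phi>R = (\<lambda>(u, (a1, a2, a3), (b1 :: real, b2 :: real, b3)).
    g (u + (a1 + a2), u, u + (a1 + a2) + a3 + b3, u + b3) *
    (\<integral>\<^sup>+x. f (sa * ((a1 + a2) / real t - (a1 + a2 + a3) / real T + c * b3) + x) \<partial>normal_law 0 V))"
  let ?S = "block_sums \<tau> t T"
  have [measurable]: "\<Phi>L \<in> borel_measurable borel" "\<Phi>R \<in> borel_measurable borel"
    unfolding \<Phi>L_def \<Phi>R_def split_beta' by measurable
  have "0 < sa" "0 < c" using q k sigma2_pos[OF q, of \<tau> T] by (simp_all add: sa_def c_def)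
  moreover have "V = (sa / real \<tau>)\<^sup>2 * (real \<tau> * q * ((real t - real \<tau>) * q) / (real \<tau> * q + (real t - real \<tau>) * q))
      + (sa * c)\<^sup>2 * ((real t - real \<tau>) * (1 - q))"
    unfolding V_def sa_def c_def by (rule conditional_variance_split[OF q k(1-3)])
  moreover have "(\<lambda>(s, x, z). g (u + s, u, u + s + x + z, u + z)) \<in> borel_measurable borel" for u
    unfolding split_beta' by measurable
  ultimately have conditional: "increments_integral q \<tau> t T (\<lambda>a b. \<Phi>L (u, a, b)) =
      increments_integral q \<tau> t T (\<lambda>a b. \<Phi>R (u, a, b))" for u
    using k increments_integral_conditional_law[OF _ assms(8) q, of "\<lambda>(s, x, z). g (u + s, u, u + s + x + z, u + z)"]
    unfolding \<Phi>L_def \<Phi>R_def increments_integral_def by simp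
  have pointwise_L: "g (Xp t \<omega>, Yp t \<omega>, Xp T \<omega>, Yp T \<omega>) * f (Xstar q T \<tau> \<omega> - Yp \<tau> \<omega>) =
      \<Phi>L (Yp t \<omega>, ?S (fst (snd \<omega>)), ?S (snd (snd \<omega>)))" for \<omega>
    using Z_and_conditional_mean_block_sums[OF _ _ q k(1-3), of \<omega>]
    by (cases "?S (fst (snd \<omega>))", cases "?S (snd (snd \<omega>))") (simp add: \<Phi>L_def sa_def c_def)
  have pointwise_R: "g (Xp t \<omega>, Yp t \<omega>, Xp T \<omega>, Yp T \<omega>) *
      (\<integral>\<^sup>+ z. f z \<partial>normal_law (sa / sigma2 q T t * (xstar q T t (Xp t \<omega>) (Yp T \<omega>) (Xp T \<omega>) - Yp t \<omega>)) V) =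
      \<Phi>R (Yp t \<omega>, ?S (fst (snd \<omega>)), ?S (snd (snd \<omega>)))" for \<omega>
    using Z_and_conditional_mean_block_sums[OF _ _ q k(1-3), of \<omega>]
    by (cases "?S (fst (snd \<omega>))", cases "?S (snd (snd \<omega>))")
      (simp add: \<Phi>R_def sa_def c_def nn_integral_normal_law_shift[of f _ V])
  show ?thesis
    unfolding V_def[symmetric] unfolding sa_def[symmetric] pointwise_L pointwise_R
    by (simp add: nn_integral_Omega_block_sums[OF _ q k] conditional)
qed

end
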